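(* Let $p/q$ (in lowest terms, $q>0$) be a convergent of the simple continued fraction expansion of $e$. If $q=(n!)^k$ for some integer $n\ge 0$ and some integer $k>0$, then $n/k<e$.
   Context: The convergents of $e$ are the rationals obtained by truncating the simple continued fraction expansion of $e$; they begin $2/1,3/1,8/3,11/4,19/7,87/32,\dots$. *)

theory Defs
  imports Complex_Main
begin

fun cf_rem :: "real \<Rightarrow> nat \<Rightarrow> real" where
  "cf_rem x 0 = x"
| "cf_rem x (Suc i) = 1 / frac (cf_rem x i)"

definition cf_coeff :: "real \<Rightarrow> nat \<Rightarrow> int" where
  "cf_coeff x i = \<lfloor>cf_rem x i\<rfloor>"

fun cf_eval :: "int list \<Rightarrow> rat" where
  "cf_eval [] = 0"
| "cf_eval [a] = of_int a"
| "cf_eval (a # b # rest) = of_int a + 1 / cf_eval (b # rest)"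

definition cf_convergent :: "real \<Rightarrow> nat \<Rightarrow> rat" where
  "cf_convergent x m = cf_eval (map (cf_coeff x) [0..<Suc m])"

end

theory Submission
  imports Defs
begin

text \<open>
  A convergent p/q of e satisfies |e - p/q| \<le> 1/q^2. Put N = nk; then q = (n!)^k divides N!,
  so N! (p/q - s_N) is an integer, where the partial sum s_N = \<Sum>_{j\<le>N} 1/j! satisfies
  1/(N+1)! < e - s_N \<le> 1/(N! N). Whether this integer vanishes or not, it follows that
  q^2 < (N+1)!. But if n \<ge> ek, Stirling-type bounds for ln n! give (nk+1)! \<le> (n!)^(2k) = q^2.
\<close>

section \<open>Continued fraction convergents\<close>

lemma cf_rem_Suc_shift: "cf_rem x (Suc i) = cf_rem (1 / frac x) i"
  by (induction i) auto

lemma cf_coeff_Suc_shift: "cf_coeff x (Suc i) = cf_coeff (1 / frac x) i"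
  unfolding cf_coeff_def cf_rem_Suc_shift ..

fun cf_with_tail :: "int list \<Rightarrow> real \<Rightarrow> real" where
  "cf_with_tail [] t = t"
| "cf_with_tail (a # as) t = of_int a + 1 / cf_with_tail as t"

(* The product of the matrices [[a,1],[1,0]] over the list; it acts on the tail t
   as the Moebius map t \<mapsto> (A t + B) / (C t + D). *)
fun cf_matrix :: "int list \<Rightarrow> int \<times> int \<times> int \<times> int" where
  "cf_matrix [] = (1, 0, 0, 1)"
| "cf_matrix (a # as) = (case cf_matrix as of (A, B, C, D) \<Rightarrow> (a*A + C, a*B + D, A, B))"

lemma of_rat_cf_eval_snoc: "real_of_rat (cf_eval (as @ [a])) = cf_with_tail as (of_int a)"
proof (induction as)
  case Nil
  then show ?case by simp
next
  case (Cons b bs)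
  have "cf_eval ((b # bs) @ [a]) = of_int b + 1 / cf_eval (bs @ [a])"
    by (cases "bs @ [a]") auto
  with Cons show ?case by (simp add: of_rat_add of_rat_divide)
qed

lemma cf_with_tail_cf_rem: "cf_with_tail (map (cf_coeff x) [0..<m]) (cf_rem x m) = x"
proof (induction m arbitrary: x)
  case 0
  then show ?case by simp
next
  case (Suc m)
  define x' where "x' = 1 / frac x"
  have "[0..<Suc m] = 0 # map Suc [0..<m]"
    by (simp add: upt_conv_Cons map_Suc_upt)
  then have "map (cf_coeff x) [0..<Suc m] = cf_coeff x 0 # map (cf_coeff x') [0..<m]"
    by (simp add: cf_coeff_Suc_shift x'_def)
  moreover have "cf_rem x (Suc m) = cf_rem x' m"
    unfolding cf_rem_Suc_shift x'_def ..
  ultimately have "cf_with_tail (map (cf_coeff x) [0..<Suc m]) (cf_rem x (Suc m))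
      = of_int (cf_coeff x 0) + 1 / x'"
    using Suc.IH[of x'] by simp
  also have "\<dots> = x"
    by (simp add: x'_def cf_coeff_def frac_def)
  finally show ?case .
qed

lemma cf_matrix_invariants:
  assumes "\<forall>a\<in>set as. a \<ge> 1" "cf_matrix as = (A, B, C, D)"
  shows "A \<ge> 1 \<and> B \<ge> 0 \<and> C \<ge> 0 \<and> D \<ge> 0 \<and> C + D \<ge> 1 \<and> \<bar>A*D - B*C\<bar> = 1"
  using assms
proof (induction as arbitrary: A B C D)
  case Nil
  then show ?case by auto
next
  case (Cons a as)
  obtain A' B' C' D' where m: "cf_matrix as = (A', B', C', D')"
    by (metis prod_cases4)
  with Cons have IH: "A' \<ge> 1 \<and> B' \<ge> 0 \<and> C' \<ge> 0 \<and> D' \<ge> 0 \<and> C' + D' \<ge> 1 \<and> \<bar>A'*D' - B'*C'\<bar> = 1"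
    by auto
  have a: "a \<ge> 1"
    using Cons.prems by auto
  have eq: "A = a*A' + C'" "B = a*B' + D'" "C = A'" "D = B'"
    using Cons.prems m by auto
  have "A*D - B*C = - (A'*D' - B'*C')"
    by (simp add: eq algebra_simps)
  moreover have "a*A' \<ge> 1"
    using a IH by (metis mult_mono' mult_1 zero_le_one)
  moreover have "a*B' \<ge> 0"
    using a IH by simp
  ultimately show ?case
    using IH by (auto simp: eq)
qed

lemma cf_with_tail_eq_mobius:
  assumes "\<forall>a\<in>set as. a \<ge> 1" "cf_matrix as = (A, B, C, D)" "t \<ge> 1"
  shows "cf_with_tail as t = (A*t + B) / (C*t + D)"
  using assms
proof (induction as arbitrary: A B C D)
  case Nil
  then show ?case by auto
next
  case (Cons a as)
  obtain A' B' C' D' where m: "cf_matrix as = (A', B', C', D')"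
    by (metis prod_cases4)
  with Cons have IH: "cf_with_tail as t = (A'*t + B') / (C'*t + D')"
    by auto
  have "A' \<ge> 1" "B' \<ge> 0"
    using cf_matrix_invariants[of as A' B' C' D'] Cons.prems m by auto
  moreover from this \<open>t \<ge> 1\<close> have "A'*t \<ge> 1"
    by (metis mult_mono' mult_1 of_int_1_le_iff zero_le_one)
  ultimately have "A'*t + B' > 0"
    by linarith
  moreover have "A = a*A' + C'" "B = a*B' + D'" "C = A'" "D = B'"
    using Cons.prems m by auto
  ultimately show ?case
    by (simp add: IH field_simps)
qed

lemma cf_rem_not_rational: "x \<notin> \<rat> \<Longrightarrow> cf_rem x i \<notin> \<rat>"
proof (induction i)
  case (Suc i)
  have "frac (cf_rem x i) \<notin> \<rat>"
    using Suc by (metis Rats_add Rats_of_int frac_def diff_add_cancel)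
  then show ?case
    by (metis Rats_inverse cf_rem.simps(2) inverse_eq_divide inverse_inverse_eq)
qed simp

lemma cf_rem_ge_1:
  assumes "x \<ge> 1" "x \<notin> \<rat>"
  shows "cf_rem x i \<ge> 1"
proof (cases i)
  case (Suc j)
  have "cf_rem x j \<notin> \<int>"
    using cf_rem_not_rational[OF assms(2)] Ints_subset_Rats by blast
  then have "0 < frac (cf_rem x j)" "frac (cf_rem x j) < 1"
    using frac_eq_0_iff[of "cf_rem x j"] frac_ge_0[of "cf_rem x j"] frac_lt_1[of "cf_rem x j"]
    by auto
  then show ?thesis
    using Suc by simp
qed (use assms in simp)

lemma cf_coeff_ge_1: "x \<ge> 1 \<Longrightarrow> x \<notin> \<rat> \<Longrightarrow> cf_coeff x i \<ge> 1"
  using cf_rem_ge_1[of x i] by (simp add: cf_coeff_def)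

lemma mobius_diff_le:
  fixes A B C D :: int and a r :: real
  assumes det: "\<bar>A*D - B*C\<bar> = 1" and "C \<ge> 0" "C*a + D > 0" "a \<le> r" "r \<le> a + 1"
  shows "\<bar>(A*r + B) / (C*r + D) - (A*a + B) / (C*a + D)\<bar> \<le> 1 / (C*a + D)^2"
proof -
  have den: "C*a + D \<le> C*r + D"
    using assms by (simp add: mult_left_mono)
  with assms have "0 < C*r + D"
    by linarith
  then have "(A*r + B) / (C*r + D) - (A*a + B) / (C*a + D)
      = (A*D - B*C) * (r - a) / ((C*r + D) * (C*a + D))"
    using assms by (simp add: field_simps)
  also have "\<bar>\<dots>\<bar> = (r - a) / ((C*r + D) * (C*a + D))"
  proof -
    have "\<bar>real_of_int (A*D - B*C)\<bar> = 1"
      using det by (simp only: of_int_abs of_int_1)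
    with assms \<open>0 < C*r + D\<close> show ?thesis
      by (simp add: abs_mult abs_divide)
  qed
  also have "\<dots> \<le> 1 / (C*a + D)^2"
  proof -
    have "(r - a) * (C*a + D) \<le> 1 * (C*r + D)"
      using assms den by (intro mult_mono) auto
    with assms \<open>0 < C*r + D\<close> show ?thesis
      by (simp add: divide_simps power2_eq_square)
  qed
  finally show ?thesis .
qed

lemma quotient_of_denom_le:
  assumes "quotient_of x = (p, q)" "x = of_int u / of_int d" "d > 0"
  shows "q \<le> d"
proof -
  have "x = of_int p / of_int q" "q > 0"
    using quotient_of_div quotient_of_denom_pos assms(1) by auto
  with assms have "rat_of_int (p * d) = rat_of_int (u * q)"
    by (simp add: frac_eq_eq)
  then have "p * d = u * q"
    by (simp only: of_int_eq_iff)
  then have "q dvd p * d"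
    by simp
  with quotient_of_coprime[OF assms(1)] have "q dvd d"
    by (simp add: coprime_commute coprime_dvd_mult_right_iff)
  with \<open>d > 0\<close> show ?thesis
    by (simp add: zdvd_imp_le)
qed

lemma cf_convergent_and_value_mobius:
  assumes "x \<ge> 1" "x \<notin> \<rat>" and M: "cf_matrix (map (cf_coeff x) [0..<m]) = (A, B, C, D)"
  shows "cf_convergent x m = of_int (A * cf_coeff x m + B) / of_int (C * cf_coeff x m + D)"
    and "x = (A * cf_rem x m + B) / (C * cf_rem x m + D)"
proof -
  have as: "\<forall>z\<in>set (map (cf_coeff x) [0..<m]). z \<ge> 1"
    using cf_coeff_ge_1 assms by auto
  have "real_of_rat (cf_convergent x m)
      = real_of_rat (of_int (A * cf_coeff x m + B) / of_int (C * cf_coeff x m + D))"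
    using cf_with_tail_eq_mobius[OF as M] cf_coeff_ge_1[OF assms(1,2), of m]
    by (simp add: cf_convergent_def of_rat_cf_eval_snoc of_rat_divide of_rat_add of_rat_mult)
  then show "cf_convergent x m = of_int (A * cf_coeff x m + B) / of_int (C * cf_coeff x m + D)"
    by (simp only: of_rat_eq_iff)
  show "x = (A * cf_rem x m + B) / (C * cf_rem x m + D)"
    using cf_with_tail_cf_rem[of x m] cf_with_tail_eq_mobius[OF as M cf_rem_ge_1[OF assms(1,2)]]
    by simp
qed

lemma cf_convergent_approx:
  assumes "x \<ge> 1" "x \<notin> \<rat>" "quotient_of (cf_convergent x m) = (p, q)"
  shows "\<bar>x - of_int p / of_int q\<bar> \<le> 1 / (of_int q)^2"
proof -
  define a r where "a = cf_coeff x m" and "r = cf_rem x m"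
  obtain A B C D where M: "cf_matrix (map (cf_coeff x) [0..<m]) = (A, B, C, D)"
    by (metis prod_cases4)
  note conv = cf_convergent_and_value_mobius[OF assms(1,2) M, folded a_def r_def]
  have inv: "\<bar>A*D - B*C\<bar> = 1" "C \<ge> 0" "C + D \<ge> 1"
    using cf_matrix_invariants[OF _ M] cf_coeff_ge_1 assms by auto
  have "a \<ge> 1" "a \<le> r" "r \<le> a + 1"
    using cf_coeff_ge_1 assms by (auto simp: a_def r_def cf_coeff_def)
  define d where "d = C*a + D"
  have "C \<le> C*a"
    using inv \<open>a \<ge> 1\<close> by (simp add: mult_le_cancel_left1)
  with inv have d: "d \<ge> 1"
    by (simp add: d_def)
  then have "q \<le> d"
    using quotient_of_denom_le[OF assms(3) conv(1)] by (simp add: d_def)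
  have "\<bar>x - real_of_rat (cf_convergent x m)\<bar> \<le> 1 / d^2"
  proof -
    have "0 < real_of_int C * a + D"
      using d by (simp add: d_def flip: of_int_mult of_int_add)
    then show ?thesis
      using mobius_diff_le[of A D B C a r] inv \<open>a \<le> r\<close> \<open>r \<le> a + 1\<close>
      by (simp add: conv(1) d_def of_rat_divide of_rat_add of_rat_mult flip: conv(2))
  qed
  also have "\<dots> \<le> 1 / (of_int q)^2"
    using \<open>q \<le> d\<close> quotient_of_denom_pos[OF assms(3)]
    by (simp add: divide_left_mono power_mono)
  finally show ?thesis
    using quotient_of_div[OF assms(3)] by (simp add: of_rat_divide)
qed

section \<open>Partial sums of the exponential series at 1\<close>

definition exp1_partial :: "nat \<Rightarrow> real" where
  "exp1_partial N = (\<Sum>j\<le>N. 1 / fact j)"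

lemma sums_inverse_fact_exp1: "(\<lambda>j. 1 / fact j) sums (exp 1 :: real)"
  using exp_converges[of "1::real"] by (simp add: divide_inverse scaleR_conv_of_real)

lemma summable_inverse_fact_shift: "summable (\<lambda>j. 1 / fact (j + Suc N) :: real)"
  using summable_iff_shift[of "\<lambda>j. 1 / fact j :: real" "Suc N"] sums_inverse_fact_exp1
  by (simp add: sums_iff)

lemma exp1_minus_partial: "exp 1 - exp1_partial N = (\<Sum>j. 1 / fact (j + Suc N))"
  using suminf_split_initial_segment[OF sums_summable[OF sums_inverse_fact_exp1], of "Suc N"]
    sums_inverse_fact_exp1
  by (simp add: sums_iff exp1_partial_def lessThan_Suc_atMost)

lemma exp1_minus_partial_gt: "exp 1 - exp1_partial N > 1 / fact (Suc N)"
proof -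
  define f where "f = (\<lambda>j. 1 / fact (j + Suc N) :: real)"
  have "(\<Sum>j\<in>{0, 1}. f j) \<le> suminf f"
    unfolding f_def by (rule sum_le_suminf[OF summable_inverse_fact_shift]) auto
  moreover have "f 0 = 1 / fact (Suc N)" "f 1 > 0"
    by (simp_all add: f_def)
  ultimately have "suminf f > 1 / fact (Suc N)"
    by simp
  then show ?thesis
    by (simp add: exp1_minus_partial f_def)
qed

lemma exp1_partial_less: "exp1_partial N < exp 1"
  using exp1_minus_partial_gt[of N] by (smt (verit) divide_pos_pos fact_gt_zero)

lemma fact_ge_fact_mult_power: "(fact (j + Suc N) :: real) \<ge> fact N * (real N + 1) ^ Suc j"
proof (induction j)
  case (Suc j)
  have "(real N + 1) * (fact N * (real N + 1) ^ Suc j) \<le> (real (j + Suc N) + 1) * fact (j + Suc N)"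
    using Suc by (intro mult_mono) auto
  then show ?case
    by (simp add: algebra_simps)
qed (simp add: algebra_simps)

(* Bounding the tail by a geometric series with ratio 1 / (N + 1). *)
lemma exp1_minus_partial_le:
  assumes "N \<ge> 1"
  shows "exp 1 - exp1_partial N \<le> 1 / (fact N * real N)"
proof -
  define x where "x = 1 / (real N + 1)"
  have "0 < x" "x < 1"
    using assms by (auto simp: x_def field_simps)
  then have geom: "(\<lambda>j. x / fact N * x ^ j) sums (x / fact N * (1 / (1 - x)))"
    by (intro sums_mult geometric_sums) auto
  have "1 / fact (j + Suc N) \<le> x / fact N * x ^ j" for j
  proof -
    have "x / fact N * x ^ j = 1 / (fact N * (real N + 1) ^ Suc j)"
      by (simp add: x_def power_divide field_simps)
    then show ?thesis
      using fact_ge_fact_mult_power[of N j] by (simp add: divide_left_mono)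
  qed
  then have "(\<Sum>j. 1 / fact (j + Suc N)) \<le> (\<Sum>j. x / fact N * x ^ j)"
    using summable_inverse_fact_shift geom by (intro suminf_le) (auto simp: sums_iff)
  also have "\<dots> = x / fact N * (1 / (1 - x))"
    using geom by (simp add: sums_iff)
  also have "\<dots> = 1 / (fact N * real N)"
  proof -
    have "fact N * real N + fact N * (real N * real N) > 0"
      using assms by (intro add_pos_pos) auto
    with assms show ?thesis
      by (simp add: x_def field_simps)
  qed
  finally show ?thesis
    by (simp add: exp1_minus_partial)
qed

lemma fact_mult_exp1_partial_Ints: "fact N * exp1_partial N \<in> \<int>"
proof -
  have "fact N / fact j \<in> (\<int> :: real set)" if "j \<le> N" for j
  proof -
    have "fact j dvd (fact N :: nat)"
      using that by (rule fact_dvd)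
    then show ?thesis
      by (metis Ints_of_nat of_nat_fact real_of_nat_div)
  qed
  then show ?thesis
    by (auto simp: exp1_partial_def sum_distrib_left intro!: Ints_sum)
qed

lemma fact_mult_exp1_minus_partial_not_Ints:
  assumes "N \<ge> 2"
  shows "fact N * (exp 1 - exp1_partial N) \<notin> \<int>"
proof
  assume "fact N * (exp 1 - exp1_partial N) \<in> \<int>"
  then obtain z where z: "fact N * (exp 1 - exp1_partial N) = of_int z"
    by (elim Ints_cases)
  have "0 < fact N * (exp 1 - exp1_partial N)"
    using exp1_partial_less by simp
  moreover have "fact N * (exp 1 - exp1_partial N) \<le> fact N * (1 / (fact N * real N))"
    using exp1_minus_partial_le assms by (intro mult_left_mono) auto
  moreover have "fact N * (1 / (fact N * real N)) < 1"
    using assms by simp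
  ultimately show False
    unfolding z by simp
qed

lemma exp1_not_rational: "(exp 1 :: real) \<notin> \<rat>"
proof
  assume "(exp 1 :: real) \<in> \<rat>"
  then obtain a b :: int where "b > 0" and ab: "(exp 1 :: real) = of_int a / of_int b"
    by (elim Rats_cases') auto
  define N where "N = Suc (nat b)"
  have "nat b dvd fact N"
    using \<open>b > 0\<close> by (simp add: N_def dvd_fact)
  then obtain c where "fact N = nat b * c"
    by blast
  then have "(fact N :: real) = of_int b * real c"
    using \<open>b > 0\<close> by (metis of_nat_fact of_nat_mult of_nat_nat less_imp_le)
  then have "fact N * exp 1 = (of_int (a * int c) :: real)"
    using \<open>b > 0\<close> by (simp add: ab)
  then have "fact N * (exp 1 - exp1_partial N) \<in> \<int>"
    using fact_mult_exp1_partial_Ints[of N] by (simp add: right_diff_distrib)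
  moreover have "N \<ge> 2"
    using \<open>b > 0\<close> by (simp add: N_def)
  ultimately show False
    using fact_mult_exp1_minus_partial_not_Ints by blast
qed

lemma exp1_gt_5_div_2: "exp 1 > (5/2 :: real)"
proof -
  have "exp1_partial 2 = 5/2"
    by (simp add: exp1_partial_def numeral_eq_Suc)
  then show ?thesis
    using exp1_partial_less[of 2] by simp
qed

section \<open>Rational approximations of e with denominator dividing N!\<close>

lemma fact_power_dvd_fact_mult: "(fact n :: nat) ^ k dvd fact (n * k)"
proof (induction k)
  case (Suc k)
  have "fact n ^ Suc k dvd (fact n :: nat) * fact (n * k)"
    using Suc.IH by simp
  also have "\<dots> dvd fact (n + n * k)"
    by (rule fact_fact_dvd_fact)
  finally show ?case
    by (simp add: algebra_simps)
qed simp

(* N! (p/Q - s_N) is an integer: if it is 0 then 1/(N+1)! < e - s_N \<le> 1/Q^2,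
   otherwise 1 \<le> N!/Q^2 + 1/N. *)
lemma exp1_approx_denom_bound:
  fixes p :: int and Q N :: nat
  assumes "Q dvd fact N" "N \<ge> 3" and approx: "\<bar>exp 1 - p / Q\<bar> \<le> 1 / Q^2"
  shows "real Q ^ 2 < fact (Suc N)"
proof (rule ccontr)
  assume "\<not> real Q ^ 2 < fact (Suc N)"
  obtain M where M: "fact N = Q * M"
    using assms(1) by blast
  then have "Q > 0"
    by (metis fact_nonzero mult_is_0 neq0_conv)
  with \<open>\<not> real Q ^ 2 < fact (Suc N)\<close> have "1 / Q^2 \<le> 1 / fact (Suc N)"
    by (intro divide_left_mono) (simp_all del: fact_Suc)
  have fact_N: "(fact N :: real) = real Q * real M"
    by (metis M of_nat_fact of_nat_mult)
  define d where "d = p / Q - exp1_partial N"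
  have "fact N * d = of_int (p * M) - fact N * exp1_partial N"
    using \<open>Q > 0\<close> by (simp add: d_def fact_N right_diff_distrib)
  then have "fact N * d \<in> \<int>"
    using fact_mult_exp1_partial_Ints by simp
  have lo: "1 / fact (Suc N) < exp 1 - exp1_partial N"
    by (rule exp1_minus_partial_gt)
  have hi: "exp 1 - exp1_partial N \<le> 1 / (fact N * real N)"
    using assms by (intro exp1_minus_partial_le) auto
  show False
  proof (cases "d = 0")
    case True
    then show False
      using approx lo \<open>1 / Q^2 \<le> 1 / fact (Suc N)\<close> by (simp add: d_def)
  next
    case False
    with \<open>fact N * d \<in> \<int>\<close> have "1 \<le> fact N * \<bar>d\<bar>"
      using Ints_nonzero_abs_ge1 by (fastforce simp: abs_mult)
    also have "\<dots> \<le> fact N * (1 / Q^2 + 1 / (fact N * real N))"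
      using approx hi exp1_partial_less[of N]
      by (intro mult_left_mono) (auto simp: d_def abs_le_iff)
    also have "\<dots> \<le> fact N * (1 / fact (Suc N) + 1 / (fact N * real N))"
      using \<open>1 / Q^2 \<le> 1 / fact (Suc N)\<close> by (intro mult_left_mono) auto
    also have "\<dots> = 1 / (real N + 1) + 1 / real N"
      using assms by (simp add: distrib_left add.commute)
    also have "\<dots> < 1"
    proof -
      have "1 / (real N + 1) \<le> 1/4" "1 / real N \<le> 1/3"
        using assms by (auto simp: field_simps)
      then show ?thesis
        by linarith
    qed
    finally show False
      by simp
  qed
qed

section \<open>Stirling-type bounds for ln n!\<close>

lemma ln_one_plus_minus_le:
  fixes u :: real
  assumes "0 \<le> u" "u < 1"
  shows "(1 + u) * ln (1 + u) - (1 - u) * ln (1 - u) \<le> 2 * u"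
proof -
  define h where "h u = 2 * u - (1 + u) * ln (1 + u) + (1 - u) * ln (1 - u)" for u :: real
  have "h 0 \<le> h u"
  proof (rule DERIV_nonneg_imp_nondecreasing[OF assms(1)])
    fix x :: real
    assume x: "0 \<le> x" "x \<le> u"
    with assms have "0 < 1 + x" "0 < 1 - x"
      by auto
    then have "(h has_real_derivative - (ln (1 + x) + ln (1 - x))) (at x)"
      unfolding h_def by (auto intro!: derivative_eq_intros)
    moreover have "ln (1 + x) + ln (1 - x) \<le> 0"
    proof -
      have "ln (1 + x) + ln (1 - x) = ln ((1 + x) * (1 - x))"
        using \<open>0 < 1 + x\<close> \<open>0 < 1 - x\<close> by (simp add: ln_mult)
      also have "\<dots> \<le> (1 + x) * (1 - x) - 1"
        using \<open>0 < 1 + x\<close> \<open>0 < 1 - x\<close> by (intro ln_le_minus_one) simp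
      also have "\<dots> \<le> 0"
        by (simp add: algebra_simps)
      finally show ?thesis .
    qed
    ultimately show "\<exists>y. (h has_real_derivative y) (at x) \<and> 0 \<le> y"
      by force
  qed
  then show ?thesis
    by (simp add: h_def)
qed

lemma ln_one_plus_ge:
  fixes x :: real
  assumes "0 \<le> x"
  shows "2 * x / (2 + x) \<le> ln (1 + x)"
proof -
  define h where "h x = ln (1 + x) - 2 * x / (2 + x)" for x :: real
  have "h 0 \<le> h x"
  proof (rule DERIV_nonneg_imp_nondecreasing[OF assms])
    fix y :: real
    assume "0 \<le> y" "y \<le> x"
    then have "(h has_real_derivative 1 / (1 + y) - 4 / (2 + y)^2) (at y)"
      unfolding h_def by (auto intro!: derivative_eq_intros simp: field_simps power2_eq_square)
    moreover have "4 / (2 + y)^2 \<le> 1 / (1 + y)"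
      using \<open>0 \<le> y\<close> by (simp add: divide_simps power2_eq_square algebra_simps)
    ultimately show "\<exists>z. (h has_real_derivative z) (at y) \<and> 0 \<le> z"
      by force
  qed
  then show ?thesis
    by (simp add: h_def)
qed

lemma ln_fact_ge_step:
  fixes j :: real
  assumes "j \<ge> 1"
  shows "(j + 1/2) * ln (j + 1/2) - (j - 1/2) * ln (j - 1/2) \<le> ln j + 1"
proof -
  define u where "u = 1 / (2 * j)"
  have u: "0 \<le> u" "u < 1" and j: "j + 1/2 = j * (1 + u)" "j - 1/2 = j * (1 - u)"
    using assms by (auto simp: u_def field_simps)
  have "ln (j + 1/2) = ln j + ln (1 + u)" "ln (j - 1/2) = ln j + ln (1 - u)"
    using assms u by (simp_all add: j ln_mult)
  then have "(j + 1/2) * ln (j + 1/2) - (j - 1/2) * ln (j - 1/2)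
      = ln j + ((j + 1/2) * ln (1 + u) - (j - 1/2) * ln (1 - u))"
    by (simp add: algebra_simps)
  also have "\<dots> = ln j + j * ((1 + u) * ln (1 + u) - (1 - u) * ln (1 - u))"
    unfolding j by (simp add: algebra_simps)
  also have "\<dots> \<le> ln j + j * (2 * u)"
    using ln_one_plus_minus_le[OF u] assms by simp
  also have "\<dots> = ln j + 1"
    using assms by (simp add: u_def)
  finally show ?thesis .
qed

lemma ln_fact_ge: "(real n + 1/2) * ln (real n + 1/2) - real n + ln 2 / 2 \<le> ln (fact n)"
proof (induction n)
  case 0
  then show ?case
    by (simp add: ln_div)
next
  case (Suc n)
  have "ln (fact (Suc n)) = ln (real n + 1) + ln (fact n)"
    by (simp add: ln_mult add.commute)
  moreover have "real n + 1 + 1/2 = real (Suc n) + 1/2" "real n + 1 - 1/2 = real n + 1/2"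
    by simp_all
  then have "(real (Suc n) + 1/2) * ln (real (Suc n) + 1/2) - (real n + 1/2) * ln (real n + 1/2)
      \<le> ln (real n + 1) + 1"
    using ln_fact_ge_step[of "real n + 1"] by (simp only:)
  ultimately show ?case
    using Suc.IH by simp
qed

lemma ln_fact_le:
  assumes "n \<ge> 1"
  shows "ln (fact n) \<le> (real n + 1/2) * ln (real n) - real n + 1"
  using assms
proof (induction n rule: dec_induct)
  case (step n)
  have "2 / (2 * real n + 1) \<le> ln (1 + 1 / real n)"
    using ln_one_plus_ge[of "1 / real n"] step by (simp add: field_simps)
  also have "1 + 1 / real n = (real n + 1) / real n"
    using step by (simp add: field_simps)
  also have "ln \<dots> = ln (real n + 1) - ln (real n)"
    using step by (simp add: ln_div)
  finally have "1 \<le> (real n + 1/2) * (ln (real n + 1) - ln (real n))"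
    using step by (simp add: field_simps)
  moreover have "ln (fact (Suc n)) = ln (real n + 1) + ln (fact n)"
    by (simp add: ln_mult add.commute)
  ultimately show ?case
    using step.IH by (simp add: algebra_simps)
qed simp

section \<open>Comparing (nk+1)! with (n!)^(2k)\<close>

lemma Suc_le_fact: "n \<ge> 3 \<Longrightarrow> Suc n \<le> fact n"
proof (induction n rule: dec_induct)
  case (step n)
  have "Suc (Suc n) \<le> Suc n * Suc n"
    using step(1) by (cases n) auto
  also have "\<dots> \<le> Suc n * fact n"
    using step by (intro mult_left_mono) auto
  finally show ?case
    by simp
qed (simp add: numeral_eq_Suc)

lemma nine_poly_le_double_power:
  fixes n k :: nat
  assumes "k \<ge> 2" "n \<ge> 6" "n \<ge> 2 * k"
  shows "9 * (n * k + 1)^2 * (n * k) \<le> (2 * n)^(2 * k)"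
proof (cases "k = 2")
  case True
  have "6 * n \<le> n * n"
    using assms by simp
  moreover have "(n * 2 + 1)^2 = 4 * (n * n) + 4 * n + 1"
    by (simp add: power2_eq_square algebra_simps)
  ultimately have "(n * 2 + 1)^2 \<le> 5 * (n * n)"
    using assms by linarith
  then have "9 * (n * 2 + 1)^2 * (n * 2) \<le> 90 * (n * n * n)"
    by simp
  also have "\<dots> \<le> 16 * n * (n * n * n)"
    using assms by (intro mult_right_mono) auto
  also have "\<dots> = (2 * n)^(2 * 2)"
    by (simp add: power_def algebra_simps)
  finally show ?thesis
    using True by simp
next
  case False
  with assms have "k \<ge> 3"
    by simp
  have "n * k \<le> n * n"
    using assms by simp
  moreover have "n * k + 1 \<le> n * n"
  proof -
    have "2 * (n * k) \<le> n * n"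
      using assms by (metis mult.left_commute mult_le_mono2)
    moreover have "n * k \<ge> 1"
      using assms by simp
    ultimately show ?thesis
      by linarith
  qed
  ultimately have "9 * (n * k + 1)^2 * (n * k) \<le> 9 * (n * n)^2 * (n * n)"
    by (intro mult_mono mult_left_mono power_mono) auto
  also have "\<dots> \<le> (2 * n)^6"
    by (simp add: power_def algebra_simps)
  also have "\<dots> \<le> (2 * n)^(2 * k)"
    using \<open>k \<ge> 3\<close> assms by (intro power_increasing) auto
  finally show ?thesis .
qed

lemma ln_poly_le_double_power:
  fixes n k :: nat
  assumes "k \<ge> 2" "n \<ge> 6" "n \<ge> 2 * k"
  shows "2 + 2 * ln (real n * k + 1) + ln (real n * k) \<le> 2 * k * ln (2 * real n)"
proof -
  have pos: "0 < real n * k"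
    using assms by simp
  have "exp 2 = exp 1 * (exp 1 :: real)"
    by (simp flip: exp_add)
  also have "\<dots> \<le> 3 * 3"
    using exp_le by (intro mult_mono) auto
  finally have "2 \<le> ln (9 :: real)"
    using ln_mono[of "exp 2" 9] by simp
  have "real (9 * (n * k + 1)^2 * (n * k)) \<le> real ((2 * n)^(2 * k))"
    using nine_poly_le_double_power[OF assms] by (simp only: of_nat_le_iff)
  then have "ln (9 * (real n * k + 1)^2 * (real n * k)) \<le> ln ((2 * real n)^(2 * k))"
    using pos by (intro ln_mono) (auto simp: add.commute)
  moreover have "ln (9 * X^2 * Y) = ln 9 + 2 * ln X + ln Y" if "X > 0" "Y > 0" for X Y :: real
    using that by (simp add: ln_mult ln_realpow)
  then have "ln (9 * (real n * k + 1)^2 * (real n * k)) = ln 9 + 2 * ln (real n * k + 1) + ln (real n * k)"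
    using pos by (metis add_pos_pos zero_less_one)
  moreover have "ln ((2 * real n)^(2 * k)) = 2 * k * ln (2 * real n)"
    using pos by (subst ln_realpow) auto
  ultimately show ?thesis
    using \<open>2 \<le> ln 9\<close> by linarith
qed

(* With a = ln n and b = ln k, the leading terms 2nk a - 2nk and nk (a + b) - nk of the two
   sides compare because a \<ge> 1 + b, i.e. n \<ge> e k; the remaining lower-order terms are
   controlled by ln_poly_le_double_power. *)
lemma ln_fact_Suc_mult_le:
  fixes n k :: nat
  assumes "k \<ge> 2" "exp 1 * k \<le> n"
  shows "ln (fact (n * k + 1)) \<le> 2 * k * ln (fact n)"
proof -
  have "2 * real k \<le> exp 1 * k" "5/2 * real k < exp 1 * k"
    using assms exp1_gt_5_div_2 exp_ge_add_one_self[of 1] by (auto intro: mult_strict_right_mono)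
  with assms have "n \<ge> 2 * k" "n \<ge> 6"
    by linarith+
  define a b N where "a = ln (real n)" and "b = ln (real k)" and "N = real n * k"
  have "1 + b \<le> a"
  proof -
    have "ln (exp 1 * k) \<le> a"
      unfolding a_def using assms by (intro ln_mono) auto
    with assms show ?thesis
      by (simp add: ln_mult b_def)
  qed
  then have "N + N * b \<le> N * a"
    using mult_left_mono[of "1 + b" a N] by (simp add: N_def distrib_left)
  moreover have "2 * N * a + k * a - 2 * N + k * ln 2 \<le> 2 * k * ln (fact n)"
  proof -
    have "(real n + 1/2) * a \<le> (real n + 1/2) * ln (real n + 1/2)"
      unfolding a_def using \<open>n \<ge> 6\<close> by (intro mult_left_mono ln_mono) auto
    then have "(real n + 1/2) * a - real n + ln 2 / 2 \<le> ln (fact n)"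
      using ln_fact_ge[of n] by linarith
    then have "2 * k * ((real n + 1/2) * a - real n + ln 2 / 2) \<le> 2 * k * ln (fact n)"
      by (intro mult_left_mono) auto
    then show ?thesis
      by (simp add: N_def algebra_simps)
  qed
  moreover have "ln (fact (n * k)) \<le> N * a + N * b + a / 2 + b / 2 - N + 1"
    using ln_fact_le[of "n * k"] \<open>n \<ge> 6\<close> assms
    by (simp add: a_def b_def N_def ln_mult algebra_simps)
  moreover have "2 + 2 * ln (N + 1) + (a + b) \<le> 2 * k * ln 2 + 2 * k * a"
    using ln_poly_le_double_power[of k n] assms \<open>n \<ge> 6\<close> \<open>n \<ge> 2 * k\<close>
    by (simp add: a_def b_def N_def ln_mult algebra_simps)
  moreover have "ln (fact (n * k + 1)) = ln (N + 1) + ln (fact (n * k))"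
    using add_pos_nonneg[of 1 "real n * k"] by (simp add: N_def ln_mult add.commute)
  ultimately show ?thesis
    by linarith
qed

lemma fact_Suc_mult_le_fact_power:
  fixes n k :: nat
  assumes "k \<ge> 1" "exp 1 * k \<le> n"
  shows "fact (n * k + 1) \<le> (fact n ^ (2 * k) :: real)"
proof (cases "k = 1")
  case True
  have "exp 1 \<le> real n"
    using assms True by simp
  with exp1_gt_5_div_2 have "n \<ge> 3"
    by linarith
  then have "real (Suc n) \<le> fact n"
    using Suc_le_fact by (metis of_nat_fact of_nat_le_iff)
  then have "real (Suc n) * fact n \<le> fact n * fact n"
    by (intro mult_right_mono) auto
  then show ?thesis
    using True by (simp add: power2_eq_square)
next
  case False
  with assms have "ln (fact (n * k + 1)) \<le> ln (fact n ^ (2 * k) :: real)"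
    using ln_fact_Suc_mult_le[of k n] by (simp add: ln_realpow)
  then show ?thesis
    using add_pos_nonneg[of 1 "real n * k"] by (subst (asm) ln_le_cancel_iff) auto
qed

theorem proposition4p1:
  fixes m n k :: nat and p q :: int
  assumes "quotient_of (cf_convergent (exp 1) m) = (p, q)"
    and "k > 0"
    and "q = (fact n) ^ k"
  shows "real n / real k < exp 1"
proof (rule ccontr)
  assume "\<not> real n / real k < exp 1"
  with \<open>k > 0\<close> have "exp 1 * k \<le> n"
    by (simp add: not_less le_divide_eq)
  moreover have "exp 1 \<le> exp 1 * k"
    using \<open>k > 0\<close> by simp
  ultimately have "n \<ge> 3"
    using exp1_gt_5_div_2 by linarith
  moreover have "n \<le> n * k"
    using \<open>k > 0\<close> by simp
  ultimately have "n * k \<ge> 3"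
    by linarith
  define Q :: nat where "Q = fact n ^ k"
  have "\<bar>exp 1 - of_int p / Q\<bar> \<le> 1 / real Q ^ 2"
    using cf_convergent_approx[OF _ exp1_not_rational assms(1)] assms(3)
    by (simp add: Q_def)
  then have "real Q ^ 2 < fact (Suc (n * k))"
    using exp1_approx_denom_bound[of Q "n * k"] fact_power_dvd_fact_mult[of n k] \<open>n * k \<ge> 3\<close>
    by (simp add: Q_def)
  moreover have "fact (n * k + 1) \<le> real Q ^ 2"
    using fact_Suc_mult_le_fact_power[of k n] \<open>k > 0\<close> \<open>exp 1 * k \<le> n\<close>
    by (simp add: Q_def power_mult[symmetric] mult.commute)
  ultimately show False
    by simp
qed

end
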